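(* Let $\{\varphi_i\}_{i=1}^N$ be a linearly independent set of unit vectors in $\mathbb{R}^N$ such that the family of hyperplanes $\{\varphi_i^{\perp}\}_{i=1}^N$ does norm retrieval in $\mathbb{R}^N$. Then $\{\varphi_i\}_{i=1}^N$ is an orthonormal basis for $\mathbb{R}^N$.
   Context: For a nonzero vector $\varphi\in\mathbb{R}^N$, $\varphi^\perp$ denotes the hyperplane $\{x\in\mathbb{R}^N:\langle x,\varphi\rangle=0\}$. A family of subspaces $\{W_i\}_{i=1}^M$ of $\mathbb{R}^N$ with orthogonal projections $\{P_i\}_{i=1}^M$ does norm retrieval if for all $x,y\in\mathbb{R}^N$, $\|P_ix\|=\|P_iy\|$ for all $i\in\{1,\dots,M\}$ implies $\|x\|=\|y\|$. *)

theory Defs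
  imports "HOL-Analysis.Analysis"
begin

definition orth_proj :: "'a::euclidean_space set \<Rightarrow> 'a \<Rightarrow> 'a" where
  "orth_proj W x = (THE p. p \<in> W \<and> (\<forall>w\<in>W. inner (x - p) w = 0))"

definition perp_hyperplane :: "'a::euclidean_space \<Rightarrow> 'a set" where
  "perp_hyperplane \<phi> = {x. inner x \<phi> = 0}"

definition does_norm_retrieval :: "'i set \<Rightarrow> ('i \<Rightarrow> 'a::euclidean_space set) \<Rightarrow> bool" where
  "does_norm_retrieval I W \<longleftrightarrow>
     (\<forall>x y. (\<forall>i\<in>I. norm (orth_proj (W i) x) = norm (orth_proj (W i) y)) \<longrightarrow> norm x = norm y)"

end

(*
  Since |P_i x|^2 = |x|^2 - <x, phi_i>^2, norm retrieval says that the numbers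
  |x|^2 - <x, phi_i>^2 determine |x|. Let psi be the biorthogonal system,
  <psi_k, phi_m> = delta_km. All vectors x with <x, phi_m> = +-1 for every m then
  have the same norm: such norms exceed 1 (otherwise compare x with 0), and rescaling
  y to b y with b^2 (|y|^2 - 1) = |x|^2 - 1 makes the hypothesis of norm retrieval
  hold, so |x|^2 = b^2 |y|^2, which forces |x| = |y|. Applied to the four vectors
  +-psi_k +-psi_l + (sum of the other psi_m), the polarization identity gives
  <psi_k, psi_l> = 0. Expanding phi_i in the basis psi finally yields
  <phi_i, phi_j> |psi_j|^2 = <phi_i, psi_j> = 0 for i ~= j.
*)
theory Submission
  imports Defs
begin

lemma orth_proj_eqI:
  assumes "subspace W" and "p \<in> W" and "\<forall>w\<in>W. inner (x - p) w = 0"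
  shows "orth_proj W x = p"
  unfolding orth_proj_def
proof (rule the_equality)
  show "p \<in> W \<and> (\<forall>w\<in>W. inner (x - p) w = 0)"
    using assms by blast
  fix q assume q: "q \<in> W \<and> (\<forall>w\<in>W. inner (x - q) w = 0)"
  then have "p - q \<in> W"
    using assms by (simp add: subspace_diff)
  then have "inner (x - q) (p - q) - inner (x - p) (p - q) = 0"
    using assms q by simp
  then have "inner (p - q) (p - q) = 0"
    by (simp add: inner_diff_left inner_diff_right)
  then show "q = p" by simp
qed

lemma orth_proj_perp_hyperplane:
  assumes "norm p = 1"
  shows "orth_proj (perp_hyperplane p) x = x - inner x p *\<^sub>R p"
proof (rule orth_proj_eqI)
  have pp: "inner p p = 1"
    using assms by (simp add: dot_square_norm)
  show "subspace (perp_hyperplane p)"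
    unfolding perp_hyperplane_def by (simp add: subspace_def inner_add_left)
  show "x - inner x p *\<^sub>R p \<in> perp_hyperplane p"
    using pp by (simp add: perp_hyperplane_def inner_diff_left)
  show "\<forall>w\<in>perp_hyperplane p. inner (x - (x - inner x p *\<^sub>R p)) w = 0"
    by (simp add: perp_hyperplane_def inner_commute)
qed

lemma norm_orth_proj_perp_hyperplane_sq:
  assumes "norm p = 1"
  shows "(norm (orth_proj (perp_hyperplane p) x))\<^sup>2 = (norm x)\<^sup>2 - (inner x p)\<^sup>2"
proof -
  have "inner p p = 1"
    using assms by (simp add: dot_square_norm)
  then show ?thesis
    unfolding orth_proj_perp_hyperplane[OF assms] power2_norm_eq_inner
    by (simp add: inner_diff_left inner_diff_right inner_commute power2_eq_square)
qed

lemma does_norm_retrieval_perp_hyperplanesD: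
  assumes unit: "\<forall>i\<in>I. norm (\<phi> i) = 1"
    and nr: "does_norm_retrieval I (\<lambda>i. perp_hyperplane (\<phi> i))"
    and eq: "\<forall>i\<in>I. (norm x)\<^sup>2 - (inner x (\<phi> i))\<^sup>2 = (norm y)\<^sup>2 - (inner y (\<phi> i))\<^sup>2"
  shows "norm x = norm y"
proof -
  have "norm (orth_proj (perp_hyperplane (\<phi> i)) x) = norm (orth_proj (perp_hyperplane (\<phi> i)) y)"
    if "i \<in> I" for i
    using eq unit that
    by (metis norm_orth_proj_perp_hyperplane_sq norm_ge_zero power2_eq_imp_eq)
  then show ?thesis
    using nr unfolding does_norm_retrieval_def by blast
qed

lemma biorthogonal_system_exists:
  fixes \<phi> :: "'i \<Rightarrow> 'a::euclidean_space"
  assumes inj: "inj_on \<phi> I" and indep: "independent (\<phi> ` I)"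
  obtains \<psi> where "\<And>k m. k \<in> I \<Longrightarrow> m \<in> I \<Longrightarrow> inner (\<psi> k) (\<phi> m) = (if k = m then 1 else 0)"
proof -
  have "\<exists>v. \<forall>m\<in>I. inner v (\<phi> m) = (if k = m then 1 else 0)" if k: "k \<in> I" for k
  proof -
    let ?S = "\<phi> ` (I - {k})"
    obtain y z where y: "y \<in> span ?S" and z: "\<And>w. w \<in> span ?S \<Longrightarrow> orthogonal z w"
      and decomp: "\<phi> k = y + z"
      using orthogonal_subspace_decomp_exists[of ?S "\<phi> k"] by blast
    have "?S = \<phi> ` I - {\<phi> k}"
      using inj k by (simp add: inj_on_image_set_diff)
    then have "\<phi> k \<notin> span ?S"
      using indep k by (metis dependent_def imageI)
    then have "z \<noteq> 0"
      using y decomp by (metis add.right_neutral)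
    moreover have "inner z (\<phi> k) = inner z z"
      using z[OF y] decomp by (simp add: inner_add_right orthogonal_def)
    moreover have "inner z (\<phi> m) = 0" if "m \<in> I" "m \<noteq> k" for m
      using z[of "\<phi> m"] that by (simp add: orthogonal_def span_base)
    ultimately have "\<forall>m\<in>I. inner (z /\<^sub>R inner z z) (\<phi> m) = (if k = m then 1 else 0)"
      by (simp add: inner_commute)
    then show ?thesis ..
  qed
  then show thesis
    using that by (metis (no_types))
qed

lemma inner_sum_biorthogonal:
  assumes "finite I" and "m \<in> I"
    and biorth: "\<And>k. k \<in> I \<Longrightarrow> inner (\<psi> k) (\<phi> m) = (if k = m then 1 else 0)"
  shows "inner (\<Sum>k\<in>I. c k *\<^sub>R \<psi> k) (\<phi> m) = c m"
proof -
  have "inner (\<Sum>k\<in>I. c k *\<^sub>R \<psi> k) (\<phi> m) = (\<Sum>k\<in>I. c k * inner (\<psi> k) (\<phi> m))"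
    by (simp add: inner_sum_left)
  also have "\<dots> = (\<Sum>k\<in>I. if k = m then c k else 0)"
    using biorth by (intro sum.cong) auto
  also have "\<dots> = c m"
    using assms(1,2) by simp
  finally show ?thesis .
qed

lemma biorthogonal_expansion:
  assumes "finite I" and spanning: "span (\<phi> ` I) = UNIV"
    and biorth: "\<And>k m. k \<in> I \<Longrightarrow> m \<in> I \<Longrightarrow> inner (\<psi> k) (\<phi> m) = (if k = m then 1 else 0)"
  shows "v = (\<Sum>k\<in>I. inner v (\<phi> k) *\<^sub>R \<psi> k)"
proof -
  let ?d = "v - (\<Sum>k\<in>I. inner v (\<phi> k) *\<^sub>R \<psi> k)"
  have "inner (\<Sum>k\<in>I. inner v (\<phi> k) *\<^sub>R \<psi> k) (\<phi> m) = inner v (\<phi> m)" if "m \<in> I" for m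
    using assms(1) that biorth[OF _ that] by (rule inner_sum_biorthogonal)
  then have "orthogonal ?d u" if "u \<in> \<phi> ` I" for u
    using that by (auto simp: orthogonal_def inner_diff_left)
  moreover have "?d \<in> span (\<phi> ` I)"
    using spanning by simp
  ultimately have "orthogonal ?d ?d"
    by (metis orthogonal_to_span)
  then show ?thesis
    by (simp add: orthogonal_def)
qed

lemma norm_retrieval_unimodular_norm_gt_1:
  fixes \<phi> :: "'i \<Rightarrow> 'a::euclidean_space"
  assumes unit: "\<forall>i\<in>I. norm (\<phi> i) = 1"
    and nr: "does_norm_retrieval I (\<lambda>i. perp_hyperplane (\<phi> i))"
    and "I \<noteq> {}"
    and x: "\<forall>m\<in>I. \<bar>inner x (\<phi> m)\<bar> = 1"
  shows "norm x > 1"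
proof -
  obtain i where i: "i \<in> I"
    using \<open>I \<noteq> {}\<close> by blast
  have "\<bar>inner x (\<phi> i)\<bar> \<le> norm x * norm (\<phi> i)"
    by (rule Cauchy_Schwarz_ineq2)
  then have "norm x \<ge> 1"
    using x unit i by simp
  moreover have "norm x \<noteq> 1"
  proof
    assume "norm x = 1"
    then have "\<forall>m\<in>I. (norm x)\<^sup>2 - (inner x (\<phi> m))\<^sup>2 = (norm 0)\<^sup>2 - (inner 0 (\<phi> m))\<^sup>2"
      using x by (simp add: abs_square_eq_1)
    then have "norm x = norm (0::'a)"
      by (rule does_norm_retrieval_perp_hyperplanesD[OF unit nr])
    with \<open>norm x = 1\<close> show False
      by simp
  qed
  ultimately show ?thesis
    by simp
qed

lemma norm_retrieval_unimodular_norm_eq: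
  fixes \<phi> :: "'i \<Rightarrow> 'a::euclidean_space"
  assumes unit: "\<forall>i\<in>I. norm (\<phi> i) = 1"
    and nr: "does_norm_retrieval I (\<lambda>i. perp_hyperplane (\<phi> i))"
    and "I \<noteq> {}"
    and x: "\<forall>m\<in>I. \<bar>inner x (\<phi> m)\<bar> = 1"
    and y: "\<forall>m\<in>I. \<bar>inner y (\<phi> m)\<bar> = 1"
  shows "norm x = norm y"
proof -
  define X Y where "X = (norm x)\<^sup>2" and "Y = (norm y)\<^sup>2"
  have "X > 1" "Y > 1"
    using norm_retrieval_unimodular_norm_gt_1[OF unit nr \<open>I \<noteq> {}\<close>] x y
    by (simp_all add: X_def Y_def one_less_power)
  define b where "b = sqrt ((X - 1) / (Y - 1))"
  have b2: "b\<^sup>2 = (X - 1) / (Y - 1)"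
    using \<open>X > 1\<close> \<open>Y > 1\<close> by (simp add: b_def)
  have "norm x = norm (b *\<^sub>R y)"
  proof (rule does_norm_retrieval_perp_hyperplanesD[OF unit nr], intro ballI)
    fix m assume "m \<in> I"
    with x y have "(inner x (\<phi> m))\<^sup>2 = 1" "(inner y (\<phi> m))\<^sup>2 = 1"
      by (simp_all add: abs_square_eq_1)
    with b2 \<open>Y > 1\<close> show "(norm x)\<^sup>2 - (inner x (\<phi> m))\<^sup>2
        = (norm (b *\<^sub>R y))\<^sup>2 - (inner (b *\<^sub>R y) (\<phi> m))\<^sup>2"
      by (simp add: X_def Y_def power_mult_distrib field_simps)
  qed
  then have "X = b\<^sup>2 * Y"
    by (simp add: X_def Y_def power_mult_distrib)
  with b2 \<open>Y > 1\<close> have "X * (Y - 1) = (X - 1) * Y"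
    by (simp add: field_simps)
  then have "X = Y"
    by (simp add: algebra_simps)
  then show ?thesis
    by (simp add: X_def Y_def power2_eq_iff_nonneg)
qed

lemma norm_retrieval_biorthogonal_pairwise_orthogonal:
  fixes \<phi> \<psi> :: "'i \<Rightarrow> 'a::euclidean_space"
  assumes unit: "\<forall>i\<in>I. norm (\<phi> i) = 1"
    and nr: "does_norm_retrieval I (\<lambda>i. perp_hyperplane (\<phi> i))"
    and "finite I"
    and biorth: "\<And>k m. k \<in> I \<Longrightarrow> m \<in> I \<Longrightarrow> inner (\<psi> k) (\<phi> m) = (if k = m then 1 else 0)"
    and kl: "k \<in> I" "l \<in> I" "k \<noteq> l"
  shows "inner (\<psi> k) (\<psi> l) = 0"
proof -
  define r where "r = (\<Sum>m\<in>I. (if m = k \<or> m = l then 0 else 1) *\<^sub>R \<psi> m)"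
  define w where "w s t = s *\<^sub>R \<psi> k + t *\<^sub>R \<psi> l + r" for s t :: real
  have "\<forall>m\<in>I. \<bar>inner (w s t) (\<phi> m)\<bar> = 1" if "\<bar>s\<bar> = 1" "\<bar>t\<bar> = 1" for s t
  proof
    fix m assume m: "m \<in> I"
    have "inner r (\<phi> m) = (if m = k \<or> m = l then 0 else 1)"
      unfolding r_def using \<open>finite I\<close> m biorth[OF _ m] by (rule inner_sum_biorthogonal)
    then show "\<bar>inner (w s t) (\<phi> m)\<bar> = 1"
      using that kl m biorth[OF _ m] by (auto simp: w_def inner_add_left)
  qed
  then have same_norm: "norm (w s t) = norm (w 1 1)" if "\<bar>s\<bar> = 1" "\<bar>t\<bar> = 1" for s t
    using that kl by (intro norm_retrieval_unimodular_norm_eq[OF unit nr]) auto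
  have "(norm (w 1 1))\<^sup>2 + (norm (w (-1) (-1)))\<^sup>2 - (norm (w 1 (-1)))\<^sup>2 - (norm (w (-1) 1))\<^sup>2 = 0"
    using same_norm[of "-1" "-1"] same_norm[of 1 "-1"] same_norm[of "-1" 1] by simp
  moreover have "(norm (w 1 1))\<^sup>2 + (norm (w (-1) (-1)))\<^sup>2 - (norm (w 1 (-1)))\<^sup>2 - (norm (w (-1) 1))\<^sup>2
      = 8 * inner (\<psi> k) (\<psi> l)"
    unfolding w_def power2_norm_eq_inner
    by (simp add: inner_add_left inner_add_right inner_commute algebra_simps)
  ultimately show ?thesis
    by simp
qed

lemma pairwise_orthogonal_of_biorthogonal:
  fixes \<phi> \<psi> :: "'i \<Rightarrow> 'a::euclidean_space"
  assumes "finite I" and spanning: "span (\<phi> ` I) = UNIV"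
    and biorth: "\<And>k m. k \<in> I \<Longrightarrow> m \<in> I \<Longrightarrow> inner (\<psi> k) (\<phi> m) = (if k = m then 1 else 0)"
    and dual_orth: "\<And>k l. k \<in> I \<Longrightarrow> l \<in> I \<Longrightarrow> k \<noteq> l \<Longrightarrow> inner (\<psi> k) (\<psi> l) = 0"
    and ij: "i \<in> I" "j \<in> I" "i \<noteq> j"
  shows "inner (\<phi> i) (\<phi> j) = 0"
proof -
  have "0 = inner (\<psi> j) (\<phi> i)"
    using biorth ij by simp
  also have "\<dots> = inner (\<psi> j) (\<Sum>k\<in>I. inner (\<phi> i) (\<phi> k) *\<^sub>R \<psi> k)"
    by (rule arg_cong[where f = "inner (\<psi> j)"], rule biorthogonal_expansion[OF assms(1-3)])
  also have "\<dots> = (\<Sum>k\<in>I. inner (\<phi> i) (\<phi> k) * inner (\<psi> j) (\<psi> k))"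
    by (simp add: inner_sum_right)
  also have "\<dots> = (\<Sum>k\<in>I. if k = j then inner (\<phi> i) (\<phi> j) * inner (\<psi> j) (\<psi> j) else 0)"
    using dual_orth ij by (intro sum.cong) auto
  also have "\<dots> = inner (\<phi> i) (\<phi> j) * inner (\<psi> j) (\<psi> j)"
    using \<open>finite I\<close> ij by simp
  finally have "inner (\<phi> i) (\<phi> j) * inner (\<psi> j) (\<psi> j) = 0" ..
  moreover have "\<psi> j \<noteq> 0"
    using biorth[of j j] ij by auto
  ultimately show ?thesis
    by simp
qed

theorem mainTheorem1:
  fixes \<phi> :: "nat \<Rightarrow> 'a::euclidean_space"
  assumes unit: "\<And>i. i < DIM('a) \<Longrightarrow> norm (\<phi> i) = 1"
    and inj: "inj_on \<phi> {..<DIM('a)}"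
    and indep: "independent (\<phi> ` {..<DIM('a)})"
    and nr: "does_norm_retrieval {..<DIM('a)} (\<lambda>i. perp_hyperplane (\<phi> i))"
  shows "(\<forall>i<DIM('a). \<forall>j<DIM('a). i \<noteq> j \<longrightarrow> inner (\<phi> i) (\<phi> j) = 0)
         \<and> span (\<phi> ` {..<DIM('a)}) = UNIV"
proof -
  have spanning: "span (\<phi> ` {..<DIM('a)}) = UNIV"
    using card_ge_dim_independent[OF _ indep, of UNIV] card_image[OF inj] by auto
  obtain \<psi> where biorth: "\<And>k m. k < DIM('a) \<Longrightarrow> m < DIM('a) \<Longrightarrow>
      inner (\<psi> k) (\<phi> m) = (if k = m then 1 else 0)"
    using biorthogonal_system_exists[OF inj indep] by (metis lessThan_iff)
  have dual_orth: "inner (\<psi> k) (\<psi> l) = 0" if "k < DIM('a)" "l < DIM('a)" "k \<noteq> l" for k l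
    using unit that biorth
    by (intro norm_retrieval_biorthogonal_pairwise_orthogonal[OF _ nr]) auto
  have "inner (\<phi> i) (\<phi> j) = 0" if "i < DIM('a)" "j < DIM('a)" "i \<noteq> j" for i j
    by (rule pairwise_orthogonal_of_biorthogonal[of "{..<DIM('a)}" \<phi> \<psi>])
      (use that biorth dual_orth spanning in auto)
  with spanning show ?thesis
    by blast
qed

end
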